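(* Let $L$ be a frame. A filter $F\subseteq L$ is exact if and only if it is an intersection of filters of the form $\{a\in L\mid y\le a\vee x\}$ for some $x,y\in L$. More precisely, $F$ is exact if and only if $$F=\{a\in L\mid \forall x,y\in L\ \big((\forall f\in F,\ y\le f\vee x)\Rightarrow y\le a\vee x\big)\}.$$
   Context: A frame is a complete lattice $L$ with $(\bigvee A)\wedge b=\bigvee_{a\in A}(a\wedge b)$. A filter is a nonempty up-closed subset closed under finite meets. A meet $\bigwedge M$ ($M\subseteq L$) is exact if $(\bigwedge M)\vee b=\bigwedge_{a\in M}(a\vee b)$ for all $b\in L$; a filter is exact if it contains $\bigwedge M$ whenever $M\subseteq F$ and $\bigwedge M$ is exact. *)

theory Defs
  imports Main
begin

definition frame_law :: "'a::complete_lattice itself \<Rightarrow> bool" where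
  "frame_law _ \<longleftrightarrow> (\<forall>(A::'a set) b. inf (Sup A) b = (SUP a\<in>A. inf a b))"

definition is_filter :: "'a::complete_lattice set \<Rightarrow> bool" where
  "is_filter F \<longleftrightarrow> F \<noteq> {} \<and> (\<forall>a b. a \<in> F \<and> a \<le> b \<longrightarrow> b \<in> F)
     \<and> (\<forall>a\<in>F. \<forall>b\<in>F. inf a b \<in> F)"

definition exact_meet :: "'a::complete_lattice set \<Rightarrow> bool" where
  "exact_meet M \<longleftrightarrow> (\<forall>b. sup (Inf M) b = (INF a\<in>M. sup a b))"

definition exact_filter :: "'a::complete_lattice set \<Rightarrow> bool" where
  "exact_filter F \<longleftrightarrow> (\<forall>M. M \<subseteq> F \<and> exact_meet M \<longrightarrow> Inf M \<in> F)"

end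

theory Submission
  imports Defs
begin

text \<open>
  The set \<open>exact_hull F\<close> of all \<open>a\<close> satisfying every constraint
  \<open>y \<le> a \<squnion> x\<close> already satisfied by all of \<open>F\<close> is closed under
  exact meets, since an exact meet commutes with \<open>_ \<squnion> x\<close>. Conversely, for
  \<open>a \<in> exact_hull F\<close> the meet of the elements \<open>f \<squnion> a\<close> (\<open>f \<in> F\<close>) is exact with
  value \<open>a\<close>; for an upward closed exact \<open>F\<close> these elements lie in \<open>F\<close>,
  hence so does \<open>a\<close>.
\<close>

definition exact_hull :: "'a::complete_lattice set \<Rightarrow> 'a set" where
  "exact_hull F = {a. \<forall>x y. (\<forall>f\<in>F. y \<le> sup f x) \<longrightarrow> y \<le> sup a x}"

lemma subset_exact_hull: "F \<subseteq> exact_hull F"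
  by (auto simp: exact_hull_def)

lemma Inf_in_exact_hull:
  assumes "M \<subseteq> exact_hull F" and "exact_meet M"
  shows "Inf M \<in> exact_hull F"
  unfolding exact_hull_def
proof (intro CollectI allI impI)
  fix x y assume "\<forall>f\<in>F. y \<le> sup f x"
  then have "y \<le> sup m x" if "m \<in> M" for m
    using assms(1) that unfolding exact_hull_def by blast
  then have "y \<le> (INF m\<in>M. sup m x)"
    by (rule INF_greatest)
  also have "\<dots> = sup (Inf M) x"
    using assms(2) by (simp add: exact_meet_def)
  finally show "y \<le> sup (Inf M) x" .
qed

lemma INF_sup_eq_if_exact_hull_le:
  assumes "a \<in> exact_hull F" and "a \<le> c"
  shows "(INF f\<in>F. sup f c) = c"
proof (rule antisym)
  have "\<forall>f\<in>F. (INF g\<in>F. sup g c) \<le> sup f c"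
    by (auto intro: INF_lower)
  then have "(INF g\<in>F. sup g c) \<le> sup a c"
    using assms(1) unfolding exact_hull_def by blast
  then show "(INF g\<in>F. sup g c) \<le> c"
    using assms(2) by (simp add: sup_absorb2)
qed (auto intro: INF_greatest)

lemma exact_meet_sup_image:
  assumes "a \<in> exact_hull F"
  shows "exact_meet ((\<lambda>f. sup f a) ` F)" and "Inf ((\<lambda>f. sup f a) ` F) = a"
proof -
  show Inf_eq: "Inf ((\<lambda>f. sup f a) ` F) = a"
    using INF_sup_eq_if_exact_hull_le[OF assms order_refl] by (simp add: image_image)
  show "exact_meet ((\<lambda>f. sup f a) ` F)"
    unfolding exact_meet_def
  proof
    fix b
    have "(INF m\<in>(\<lambda>f. sup f a) ` F. sup m b) = (INF f\<in>F. sup f (sup a b))"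
      by (simp add: image_image sup_assoc)
    also have "\<dots> = sup a b"
      using assms by (rule INF_sup_eq_if_exact_hull_le) simp
    finally show "sup (Inf ((\<lambda>f. sup f a) ` F)) b = (INF m\<in>(\<lambda>f. sup f a) ` F. sup m b)"
      using Inf_eq by simp
  qed
qed

lemma exact_hull_subset_if_exact_filter:
  assumes "exact_filter F" and up: "\<And>a b. a \<in> F \<Longrightarrow> a \<le> b \<Longrightarrow> b \<in> F"
  shows "exact_hull F \<subseteq> F"
proof
  fix a assume a: "a \<in> exact_hull F"
  have "(\<lambda>f. sup f a) ` F \<subseteq> F"
    using up by auto
  then have "Inf ((\<lambda>f. sup f a) ` F) \<in> F"
    using assms(1) exact_meet_sup_image(1)[OF a] unfolding exact_filter_def by blast
  then show "a \<in> F"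
    by (simp only: exact_meet_sup_image(2)[OF a])
qed

lemma exact_filter_iff_eq_exact_hull:
  assumes "\<And>a b. a \<in> F \<Longrightarrow> a \<le> b \<Longrightarrow> b \<in> F"
  shows "exact_filter F \<longleftrightarrow> F = exact_hull F"
proof
  assume "exact_filter F"
  show "F = exact_hull F"
    using subset_exact_hull exact_hull_subset_if_exact_filter[OF \<open>exact_filter F\<close> assms]
    by (rule equalityI)
next
  assume "F = exact_hull F"
  then show "exact_filter F"
    unfolding exact_filter_def by (metis Inf_in_exact_hull)
qed

theorem mainTheorem6:
  fixes F :: "'a::complete_lattice set"
  assumes "frame_law TYPE('a)"
    and "is_filter F"
  shows "exact_filter F \<longleftrightarrow>
    F = {a. \<forall>x y. (\<forall>f\<in>F. y \<le> sup f x) \<longrightarrow> y \<le> sup a x}"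
proof -
  have "\<And>a b. a \<in> F \<Longrightarrow> a \<le> b \<Longrightarrow> b \<in> F"
    using assms(2) unfolding is_filter_def by blast
  then have "exact_filter F \<longleftrightarrow> F = exact_hull F"
    by (rule exact_filter_iff_eq_exact_hull)
  then show ?thesis
    unfolding exact_hull_def .
qed

end
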